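(* Fix a client $k$ and a sparsification ratio $O_k\in(0,1)$. Let $q=r(d+\ell)$ and let $\mathcal{S}:\mathbb{R}^{q}\to\mathbb{R}^{q}$ be a (possibly random) sparsification operator keeping $u=O_k q$ nonzero entries ($0<u<q$) and satisfying, for all $x\in\mathbb{R}^q$, $\mathbb{E}\left[\|\mathcal{S}(x)-x\|_2^2\right]\le \left(1-\frac{u}{q}\right)\|x\|_2^2=(1-O_k)\|x\|_2^2$. Let $(\Delta\tilde{\theta}_k^t)_{t\ge 0}$ be the sequence of (concatenated) local LoRA updates of client $k$, and define the error-feedback memory by $\tilde m_k^0=0$, $\tilde{\theta}_k^t=\mathcal{S}(\tilde m_k^t+\Delta\tilde{\theta}_k^t)$ and $\tilde{m}_{k}^{t+1} = \tilde{m}_{k}^t +\Delta\tilde{\theta}_{k}^t-\tilde{\theta}_{k}^t$. Suppose the LoRA factors are trained with the near-orthogonality regularized loss (so that $\theta_{B,k}^{\mathsf T}\theta_{B,k}$ and $\theta_{A,k}\theta_{A,k}^{\mathsf T}$ are approximately diagonal). Then for every $t\ge 0$, $$\mathbb{E}\left[\left\|\tilde{m}_k^{t+1}\right\|_F^2\right] \leq \frac{4(1-O_k)}{O_k^2}\max_{0\leq i \leq t}\|\Delta\tilde{\theta}_k^i\|_F^2.$$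
   Context: LoRA: a pre-trained weight $\theta_P\in\mathbb{R}^{d\times\ell}$ is adapted by $\theta_P+\frac{\alpha}{r}\theta_B\theta_A$ with $\theta_B\in\mathbb{R}^{d\times r}$, $\theta_A\in\mathbb{R}^{r\times\ell}$. Client $k$ keeps memories $m_{B,k}\in\mathbb{R}^{d\times r}$, $m_{A,k}\in\mathbb{R}^{r\times\ell}$; concatenated quantities are $\tilde m_k^t=[m_{B,k}^{t\mathsf T}\ m_{A,k}^t]$, $\Delta\tilde\theta_k^t=[\Delta\theta_{B,k}^{t\mathsf T}\ \Delta\theta_{A,k}^t]$, $\tilde\theta_k^t=[\theta_{B,k}^{t\mathsf T}\ \theta_{A,k}^t]$ (each an $r\times(d+\ell)$ matrix, identified with a vector in $\mathbb{R}^{r(d+\ell)}$), where $\theta_{B,k}^t=\mathcal{S}(m_{B,k}^t+\Delta\theta_{B,k}^t)$, $\theta_{A,k}^t=\mathcal{S}(m_{A,k}^t+\Delta\theta_{A,k}^t)$, and $\Delta\theta_{B,k}^t,\Delta\theta_{A,k}^t$ are the client's locally trained factors at round $t$. The expectation is over the randomness of $\mathcal{S}$; the updates $\Delta\tilde\theta_k^i$ are treated as given. *)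

theory Defs
  imports "HOL-Analysis.Analysis" "HOL-Probability.Probability"
begin

text \<open>Concatenated LoRA quantities are r x (d+l) real matrices, modelled as
  real^'c^'r (rows indexed by 'r, columns by 'c, CARD('c) = d + l).
  The HOL-Analysis norm on real^'c^'r is the Frobenius norm.\<close>

definition mask :: "('r::finite \<times> 'c::finite) set \<Rightarrow> real^'c^'r \<Rightarrow> real^'c^'r" where
  "mask K x = (\<chi> i. \<chi> j. if (i, j) \<in> K then x $ i $ j else 0)"

text \<open>Distribution of the error-feedback memory m^t, where S x is the (random)
  output distribution of the sparsifier on input x, drawn with fresh randomness
  in each round; D t is the given local update at round t.\<close>
primrec ef_mem ::
  "(real^'c^'r \<Rightarrow> (real^'c^'r) pmf) \<Rightarrow> (nat \<Rightarrow> real^'c^'r) \<Rightarrow> nat \<Rightarrow> (real^'c^'r) pmf" where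
  "ef_mem S D 0 = return_pmf 0"
| "ef_mem S D (Suc t) =
     bind_pmf (ef_mem S D t) (\<lambda>m. map_pmf (\<lambda>\<theta>. m + D t - \<theta>) (S (m + D t)))"

end

theory Submission
  imports Defs
begin

text \<open>Write \<open>\<delta> = 1 - O\<^sub>k\<close> and \<open>s = \<surd>\<delta>\<close>. Conditioning on the memory \<open>m\<close> of round \<open>t\<close>,
  the contraction property gives \<open>E \<parallel>m'\<parallel>\<^sup>2 \<le> \<delta> E \<parallel>m + \<Delta>\<parallel>\<^sup>2\<close>, and a weighted triangle
  inequality splits \<open>\<delta> \<parallel>m + \<Delta>\<parallel>\<^sup>2 \<le> s \<parallel>m\<parallel>\<^sup>2 + \<delta>/(1 - s) \<parallel>\<Delta>\<parallel>\<^sup>2\<close>. The expected squared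
  memory thus obeys a linear recurrence with contraction factor \<open>s < 1\<close>, whence it stays
  below \<open>\<delta>/(1 - s)\<^sup>2\<close> times the largest \<open>\<parallel>\<Delta>\<parallel>\<^sup>2\<close> so far; finally
  \<open>1 - \<surd>(1 - O\<^sub>k) \<ge> O\<^sub>k/2\<close>.\<close>

lemma power2_norm_add_le_weighted:
  fixes a b :: "'a::real_normed_vector" and s :: real
  assumes "0 < s" "s < 1"
  shows "norm (a + b)^2 \<le> norm a^2 / s + norm b^2 / (1 - s)"
proof -
  have real_case: "(x + y)^2 \<le> x^2 / s + y^2 / (1 - s)" for x y :: real
  proof -
    have "s * (1 - s) * (x + y)^2 \<le> (1 - s) * x^2 + s * y^2"
      using zero_le_power2[of "(1 - s) * x - s * y"] by (simp add: power2_eq_square algebra_simps)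
    then show ?thesis
      using assms by (simp add: field_simps)
  qed
  have "norm (a + b)^2 \<le> (norm a + norm b)^2"
    by (simp add: norm_triangle_ineq power_mono)
  also have "\<dots> \<le> norm a^2 / s + norm b^2 / (1 - s)"
    by (rule real_case)
  finally show ?thesis .
qed

lemma finite_set_pmf_ef_mem:
  assumes "\<And>x. finite (set_pmf (S x))"
  shows "finite (set_pmf (ef_mem S D n))"
  by (induction n) (auto simp: assms)

lemma expectation_bind_pmf_finite:
  fixes p :: "'a pmf" and f :: "'a \<Rightarrow> 'b pmf" and h :: "'b \<Rightarrow> real"
  assumes "finite (set_pmf p)" "\<And>x. finite (set_pmf (f x))"
  shows "measure_pmf.expectation (p \<bind> f) h =
         measure_pmf.expectation p (\<lambda>a. measure_pmf.expectation (f a) h)"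
proof -
  have "measure_pmf.expectation (p \<bind> f) h =
          (\<Sum>a\<in>set_pmf p. pmf p a *\<^sub>R measure_pmf.expectation (f a) h)"
    using assms by (intro pmf_expectation_bind) auto
  also have "\<dots> = measure_pmf.expectation p (\<lambda>a. measure_pmf.expectation (f a) h)"
    using assms by (subst integral_measure_pmf[of "set_pmf p"]) auto
  finally show ?thesis .
qed

lemma ef_mem_Suc_expectation_le:
  assumes fin: "\<And>x. finite (set_pmf (S x))"
    and contr: "\<And>x. measure_pmf.expectation (S x) (\<lambda>y. norm (y - x)^2) \<le> \<delta> * norm x^2"
  shows "measure_pmf.expectation (ef_mem S D (Suc n)) (\<lambda>m. norm m^2)
           \<le> \<delta> * measure_pmf.expectation (ef_mem S D n) (\<lambda>m. norm (m + D n)^2)"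
proof -
  note fin_mem = finite_set_pmf_ef_mem[OF fin]
  have "measure_pmf.expectation (ef_mem S D (Suc n)) (\<lambda>m. norm m^2) =
          measure_pmf.expectation (ef_mem S D n)
            (\<lambda>m. measure_pmf.expectation (S (m + D n)) (\<lambda>y. norm (y - (m + D n))^2))"
    using fin_mem fin by (simp add: expectation_bind_pmf_finite norm_minus_commute algebra_simps)
  also have "\<dots> \<le> measure_pmf.expectation (ef_mem S D n) (\<lambda>m. \<delta> * norm (m + D n)^2)"
    using fin_mem by (intro integral_mono integrable_measure_pmf_finite contr)
  also have "\<dots> = \<delta> * measure_pmf.expectation (ef_mem S D n) (\<lambda>m. norm (m + D n)^2)"
    by simp
  finally show ?thesis .
qed

lemma ef_mem_Suc_expectation_recurrence:
  assumes "0 < s" "s < 1"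
    and fin: "\<And>x. finite (set_pmf (S x))"
    and contr: "\<And>x. measure_pmf.expectation (S x) (\<lambda>y. norm (y - x)^2) \<le> s^2 * norm x^2"
  shows "measure_pmf.expectation (ef_mem S D (Suc n)) (\<lambda>m. norm m^2)
           \<le> s * measure_pmf.expectation (ef_mem S D n) (\<lambda>m. norm m^2)
             + s^2 / (1 - s) * norm (D n)^2"
proof -
  note integrable = integrable_measure_pmf_finite[OF finite_set_pmf_ef_mem[OF fin]]
  have "measure_pmf.expectation (ef_mem S D (Suc n)) (\<lambda>m. norm m^2)
          \<le> s^2 * measure_pmf.expectation (ef_mem S D n) (\<lambda>m. norm (m + D n)^2)"
    using fin contr by (rule ef_mem_Suc_expectation_le)
  also have "\<dots> \<le> measure_pmf.expectation (ef_mem S D n)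
                   (\<lambda>m. s * norm m^2 + s^2 / (1 - s) * norm (D n)^2)"
  proof (subst integral_mult_right_zero[symmetric], intro integral_mono integrable)
    fix m
    have "s^2 * norm (m + D n)^2 \<le> s^2 * (norm m^2 / s + norm (D n)^2 / (1 - s))"
      using power2_norm_add_le_weighted assms(1,2) by (intro mult_left_mono) auto
    also have "\<dots> = s * norm m^2 + s^2 / (1 - s) * norm (D n)^2"
      using assms(1) by (simp add: field_simps power2_eq_square)
    finally show "s^2 * norm (m + D n)^2 \<le> s * norm m^2 + s^2 / (1 - s) * norm (D n)^2" .
  qed
  also have "\<dots> = s * measure_pmf.expectation (ef_mem S D n) (\<lambda>m. norm m^2)
                     + s^2 / (1 - s) * norm (D n)^2"
    by (subst Bochner_Integration.integral_add) (auto intro: integrable)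
  finally show ?thesis .
qed

lemma contracting_recurrence_le:
  fixes e x :: "nat \<Rightarrow> real"
  assumes "0 \<le> s" "s < 1" "0 \<le> c" "0 \<le> M" "e 0 \<le> 0"
    and rec: "\<And>i. i < n \<Longrightarrow> e (Suc i) \<le> s * e i + c * x i"
    and bound: "\<And>i. i < n \<Longrightarrow> x i \<le> M"
  shows "e n \<le> c / (1 - s) * M"
  using rec bound
proof (induction n)
  case 0
  with assms show ?case
    by (auto intro: order_trans[of _ 0] divide_nonneg_pos)
next
  case (Suc n)
  have "e (Suc n) \<le> s * e n + c * x n"
    using Suc.prems(1) by simp
  also have "\<dots> \<le> s * (c / (1 - s) * M) + c * M"
    using Suc assms by (intro add_mono mult_left_mono) auto
  also have "\<dots> = c / (1 - s) * M"
    using assms by (simp add: field_simps)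
  finally show ?case .
qed

lemma one_minus_sqrt_one_minus_ge:
  fixes a :: real
  assumes "a \<le> 1"
  shows "a / 2 \<le> 1 - sqrt (1 - a)"
proof -
  have "sqrt (1 - a) \<le> sqrt ((1 - a / 2)^2)"
    by (intro real_sqrt_le_mono) (simp add: power2_eq_square algebra_simps)
  then show ?thesis
    using assms by simp
qed

theorem lemma1:
  fixes S :: "real^'c::finite^'r::finite \<Rightarrow> (real^'c^'r) pmf"
    and D :: "nat \<Rightarrow> real^'c^'r"
    and u :: nat and Ok :: real and t :: nat
  defines "q \<equiv> CARD('r) * CARD('c)"
  assumes u_pos: "0 < u" and u_lt: "u < q"
    and Ok_def: "Ok = real u / real q"
    and sparse: "\<And>x y. y \<in> set_pmf (S x) \<Longrightarrow> \<exists>K. card K = u \<and> y = mask K x"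
    and contr: "\<And>x. measure_pmf.expectation (S x) (\<lambda>y. norm (y - x) ^ 2)
                     \<le> (1 - Ok) * norm x ^ 2"
  shows "measure_pmf.expectation (ef_mem S D (Suc t)) (\<lambda>m. norm m ^ 2)
           \<le> 4 * (1 - Ok) / Ok ^ 2 * Max ((\<lambda>i. norm (D i) ^ 2) ` {0..t})"
proof -
  define \<delta> s M where "\<delta> = 1 - Ok" and "s = sqrt \<delta>"
    and "M = Max ((\<lambda>i. norm (D i) ^ 2) ` {0..t})"
  define E where "E n = measure_pmf.expectation (ef_mem S D n) (\<lambda>m. norm m ^ 2)" for n
  have Ok: "0 < Ok" "Ok < 1"
    using u_pos u_lt by (auto simp: Ok_def)
  then have s: "0 < s" "s < 1" "s^2 = \<delta>"
    by (auto simp: s_def \<delta>_def)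
  have fin: "finite (set_pmf (S x))" for x
  proof (rule finite_subset)
    show "set_pmf (S x) \<subseteq> range (\<lambda>K. mask K x)"
      using sparse by blast
  qed simp
  have step: "E (Suc n) \<le> s * E n + \<delta> / (1 - s) * norm (D n)^2" for n
    unfolding E_def s(3)[symmetric] using s fin contr
    by (intro ef_mem_Suc_expectation_recurrence) (auto simp: \<delta>_def)
  have "E (Suc t) \<le> \<delta> / (1 - s) / (1 - s) * M"
    using s Ok step by (intro contracting_recurrence_le[where x = "\<lambda>i. norm (D i)^2"])
      (auto simp: E_def M_def \<delta>_def intro!: Max_ge zero_le_power2[THEN order_trans])
  also have "\<dots> \<le> \<delta> / (Ok / 2) / (Ok / 2) * M"
  proof (intro mult_right_mono frac_le divide_nonneg_pos)
    show "0 \<le> M"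
      unfolding M_def by (rule order_trans[OF zero_le_power2 Max_ge]) auto
  qed (use one_minus_sqrt_one_minus_ge[of Ok] Ok s in \<open>auto simp: s_def \<delta>_def\<close>)
  also have "\<dots> = 4 * (1 - Ok) / Ok ^ 2 * M"
    by (simp add: \<delta>_def power2_eq_square)
  finally show ?thesis
    unfolding E_def M_def .
qed

end
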